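(* Let $\vec{\alpha}=\langle\alpha_s:s\in[\mathbb{N}]^{<\infty}\rangle$ be a sequence of nonstandard hypernatural numbers. If $T$ and $S$ are $\vec{\alpha}$-trees, then $S\cap T$ is an $\vec{\alpha}$-tree if and only if either $st(T)\sqsubseteq st(S)\in T$ or $st(S)\sqsubseteq st(T)\in S$.
   Context: Setting (Alpha-Theory of Benci–Di Nasso): ZFC together with a new symbol $\alpha$ satisfying: ($\alpha$1) every sequence $\varphi=\langle\varphi_i:i\in\mathbb{N}\rangle$ has a unique ideal value $\varphi[\alpha]$; ($\alpha$2) if $\varphi[\alpha]=\psi[\alpha]$ and $f\circ\varphi$, $f\circ\psi$ make sense then $(f\circ\varphi)[\alpha]=(f\circ\psi)[\alpha]$; ($\alpha$3) constant real sequences $r$ have ideal value $r$, and $\langle i\rangle$ has ideal value $\alpha\notin\mathbb{N}$; ($\alpha$4) if $\vartheta_i=\{\varphi_i,\psi_i\}$ then $\vartheta[\alpha]=\{\varphi[\alpha],\psi[\alpha]\}$; ($\alpha$5) the constant sequence $\emptyset$ has ideal value $\emptyset$, and for nonempty $\psi_i$, $\psi[\alpha]=\{\vartheta[\alpha]:\vartheta_i\in\psi_i\ \forall i\}$. ${}^*A$ is the ideal value of the constant sequence $A$; elements of ${}^*\mathbb{N}\setminus\mathbb{N}$ are nonstandard hypernatural numbers. For finite $s,t\subseteq\mathbb{N}$, $s\sqsubseteq t$ means $s=\{j\in t:j\le i\}$ for some $i$. A tree on $\mathbb{N}$ is a nonempty $T\subseteq[\mathbb{N}]^{<\infty}$ closed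 under $\sqsubseteq$-initial segments; stem $st(T)$ = $\sqsubseteq$-maximal $s\in T$ comparable with all elements of $T$ (if it exists); $T/s=\{t\in T:s\sqsubseteq t\}$. An $\vec{\alpha}$-tree is a tree $T$ with a stem, $T/st(T)\neq\emptyset$, and $s\cup\{\alpha_s\}\in{}^*T$ for all $s\in T/st(T)$. *)

theory Defs
  imports Main
begin

(* Alpha-theory is modelled by an ultrapower: alpha corresponds to a nonprincipal
   ultrafilter U on nat (U = {A. alpha in *A}); a hypernatural is represented by
   a sequence nat => nat, taken modulo U. *)

definition is_ultrafilter :: "nat filter \<Rightarrow> bool" where
  "is_ultrafilter U \<longleftrightarrow> U \<noteq> bot \<and> (\<forall>P. eventually P U \<or> eventually (\<lambda>x. \<not> P x) U)"

definition nonprincipal :: "nat filter \<Rightarrow> bool" where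
  "nonprincipal U \<longleftrightarrow> (\<forall>n. eventually (\<lambda>i. i \<noteq> n) U)"

definition nonstd :: "nat filter \<Rightarrow> (nat \<Rightarrow> nat) \<Rightarrow> bool" where
  "nonstd U f \<longleftrightarrow> (\<forall>n. eventually (\<lambda>i. f i \<noteq> n) U)"

definition initseg :: "nat set \<Rightarrow> nat set \<Rightarrow> bool" where
  "initseg s t \<longleftrightarrow> (\<exists>i. s = {j \<in> t. j \<le> i})"

definition comparable :: "nat set \<Rightarrow> nat set \<Rightarrow> bool" where
  "comparable s t \<longleftrightarrow> initseg s t \<or> initseg t s"

definition is_tree :: "nat set set \<Rightarrow> bool" where
  "is_tree T \<longleftrightarrow> T \<noteq> {} \<and> (\<forall>t\<in>T. finite t) \<and>
     (\<forall>t\<in>T. \<forall>s. initseg s t \<longrightarrow> s \<in> T)"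

definition comp_all :: "nat set set \<Rightarrow> nat set \<Rightarrow> bool" where
  "comp_all T s \<longleftrightarrow> s \<in> T \<and> (\<forall>t\<in>T. comparable s t)"

definition is_stem :: "nat set set \<Rightarrow> nat set \<Rightarrow> bool" where
  "is_stem T s \<longleftrightarrow> comp_all T s \<and> \<not> (\<exists>s'. comp_all T s' \<and> initseg s s' \<and> s' \<noteq> s)"

definition stem :: "nat set set \<Rightarrow> nat set" where
  "stem T = (THE s. is_stem T s)"

definition subtree_above :: "nat set set \<Rightarrow> nat set \<Rightarrow> nat set set" where
  "subtree_above T s = {t \<in> T. initseg s t}"

(* x \<union> {alpha_s} \<in> *T, where alpha_s is represented by the sequence f:
   the ideal value of \<langle>x \<union> {f i}\<rangle> lies in *T iff U-almost all x \<union> {f i} lie in T *)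
definition star_mem :: "nat filter \<Rightarrow> nat set set \<Rightarrow> nat set \<Rightarrow> (nat \<Rightarrow> nat) \<Rightarrow> bool" where
  "star_mem U T s f \<longleftrightarrow> eventually (\<lambda>i. insert (f i) s \<in> T) U"

definition alpha_tree :: "nat filter \<Rightarrow> (nat set \<Rightarrow> nat \<Rightarrow> nat) \<Rightarrow> nat set set \<Rightarrow> bool" where
  "alpha_tree U \<alpha> T \<longleftrightarrow> is_tree T \<and> (\<exists>s. is_stem T s) \<and>
     subtree_above T (stem T) \<noteq> {} \<and>
     (\<forall>s \<in> subtree_above T (stem T). star_mem U T s (\<alpha> s))"

end

theory Submission
  imports Defs
begin

text \<open>
  If an \<open>\<alpha>\<close>-tree \<open>A\<close> lies inside \<open>B\<close>, then every node of \<open>B\<close> comparable with all of \<open>B\<close>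
  is an initial segment of the stem \<open>r\<close> of \<open>A\<close>: otherwise such a node would properly extend
  \<open>r\<close>, forcing the nonstandard \<open>\<alpha>\<^sub>r\<close> to be (almost surely) the least new element of that
  node. Applied to \<open>A = S \<inter> T\<close> and \<open>B = S, T\<close>, both stems are initial segments of the stem
  of \<open>S \<inter> T\<close>, hence comparable, and the larger one lies in the other tree. Conversely,
  if \<open>st(T) \<sqsubseteq> st(S) \<in> T\<close>, the same argument shows that \<open>st(S)\<close> is the stem of \<open>S \<inter> T\<close>,
  and the splitting condition above it holds in both trees, hence in the intersection.
\<close>

lemma initseg_subset: "initseg s t \<Longrightarrow> s \<subseteq> t"
  by (auto simp: initseg_def)

lemma initseg_refl: "finite s \<Longrightarrow> initseg s s"
  unfolding initseg_def by (rule exI[of _ "Max s"]) auto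

lemma initseg_trans:
  assumes "initseg a b" "initseg b c"
  shows "initseg a c"
proof -
  obtain i k where "a = {j \<in> b. j \<le> i}" "b = {j \<in> c. j \<le> k}"
    using assms by (auto simp: initseg_def)
  then have "a = {j \<in> c. j \<le> min i k}" by auto
  then show ?thesis unfolding initseg_def by blast
qed

lemma initseg_common_extension_comparable:
  assumes "initseg a c" "initseg b c"
  shows "comparable a b"
proof -
  obtain i k where a: "a = {j \<in> c. j \<le> i}" and b: "b = {j \<in> c. j \<le> k}"
    using assms by (auto simp: initseg_def)
  show ?thesis
  proof (cases "i \<le> k")
    case True
    then have "a = {j \<in> b. j \<le> i}" using a b by auto
    then show ?thesis by (auto simp: comparable_def initseg_def)
  next
    case False
    then have "b = {j \<in> a. j \<le> k}" using a b by auto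
    then show ?thesis by (auto simp: comparable_def initseg_def)
  qed
qed

lemma comparable_commute: "comparable a b \<longleftrightarrow> comparable b a"
  by (auto simp: comparable_def)

lemma stem_eqI:
  assumes "is_stem T s"
  shows "stem T = s"
  unfolding stem_def
proof (rule the_equality)
  show "is_stem T s" by fact
  fix s' assume s': "is_stem T s'"
  then have "comparable s s'"
    using assms by (auto simp: is_stem_def comp_all_def)
  then show "s' = s"
    using assms s' by (auto simp: is_stem_def comparable_def)
qed

lemma nonstd_eventually_gt:
  assumes "nonstd U f"
  shows "eventually (\<lambda>i. n < f i) U"
proof (induction n)
  case 0
  show ?case
    using assms unfolding nonstd_def by (rule allE[of _ 0], elim eventually_mono) auto
next
  case (Suc n)
  have "eventually (\<lambda>i. f i \<noteq> Suc n) U" using assms unfolding nonstd_def by blast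
  with Suc show ?case by eventually_elim auto
qed

lemma comparable_insert_imp_Least:
  assumes "initseg r t" "r \<noteq> t" "\<forall>x\<in>r. x < a" "comparable (insert a r) t"
  shows "a = (LEAST x. x \<in> t - r)"
proof -
  have "a \<in> t - r \<and> (\<forall>y \<in> t - r. a \<le> y)"
  proof (cases "initseg (insert a r) t")
    case True
    then obtain k where k: "insert a r = {j \<in> t. j \<le> k}" by (auto simp: initseg_def)
    have "a \<le> y" if "y \<in> t - r" for y
    proof (rule ccontr)
      assume "\<not> a \<le> y"
      moreover have "a \<le> k" using k by auto
      ultimately have "y \<in> insert a r" using k that by auto
      with \<open>\<not> a \<le> y\<close> that show False by auto
    qed
    then show ?thesis using k assms(3) by auto
  next
    case False
    then have "t \<subseteq> insert a r"
      using assms(4) initseg_subset by (auto simp: comparable_def)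
    moreover have "r \<subset> t" using initseg_subset[OF assms(1)] assms(2) by auto
    ultimately show ?thesis by auto
  qed
  then show ?thesis by (intro Least_equality[symmetric]) auto
qed

lemma not_eventually_comparable_insert:
  assumes "U \<noteq> bot" "nonstd U f" "finite r" "initseg r t" "r \<noteq> t"
  shows "\<not> eventually (\<lambda>i. comparable (insert (f i) r) t) U"
proof
  assume comp: "eventually (\<lambda>i. comparable (insert (f i) r) t) U"
  have "eventually (\<lambda>i. Max r < f i) U" using assms(2) by (rule nonstd_eventually_gt)
  moreover have "eventually (\<lambda>i. f i \<noteq> (LEAST x. x \<in> t - r)) U"
    using assms(2) by (auto simp: nonstd_def)
  ultimately have "eventually (\<lambda>i. False) U"
    using comp
  proof eventually_elim
    case (elim i)
    then have "\<forall>x\<in>r. x < f i" using Max_ge[OF assms(3)] by fastforce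
    then show False using comparable_insert_imp_Least[OF assms(4,5)] elim by blast
  qed
  then show False using assms(1) by (simp add: eventually_False)
qed

lemma alpha_tree_is_tree: "alpha_tree U \<alpha> T \<Longrightarrow> is_tree T"
  by (simp add: alpha_tree_def)

lemma alpha_tree_is_stem: "alpha_tree U \<alpha> T \<Longrightarrow> is_stem T (stem T)"
  using stem_eqI by (fastforce simp: alpha_tree_def)

lemma alpha_tree_stem_mem: "alpha_tree U \<alpha> T \<Longrightarrow> stem T \<in> T"
  using alpha_tree_is_stem by (fastforce simp: is_stem_def comp_all_def)

lemma alpha_tree_stem_finite: "alpha_tree U \<alpha> T \<Longrightarrow> finite (stem T)"
  using alpha_tree_stem_mem alpha_tree_is_tree by (fastforce simp: is_tree_def)

lemma alpha_tree_eventually_insert: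
  "alpha_tree U \<alpha> T \<Longrightarrow> s \<in> T \<Longrightarrow> initseg (stem T) s \<Longrightarrow>
    eventually (\<lambda>i. insert (\<alpha> s i) s \<in> T) U"
  by (auto simp: alpha_tree_def subtree_above_def star_mem_def)

lemma comp_all_initseg_if_eventually_insert:
  assumes "U \<noteq> bot" "nonstd U f" "finite r" "r \<in> B"
    and "eventually (\<lambda>i. insert (f i) r \<in> B) U" "comp_all B b"
  shows "initseg b r"
proof (rule ccontr)
  assume "\<not> initseg b r"
  moreover have "comparable b r" using assms(4,6) by (auto simp: comp_all_def)
  ultimately have "initseg r b" "r \<noteq> b"
    using initseg_refl[OF assms(3)] by (auto simp: comparable_def)
  moreover have "eventually (\<lambda>i. comparable (insert (f i) r) b) U"
    using assms(5) by eventually_elim (use assms(6) in \<open>auto simp: comp_all_def comparable_commute\<close>)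
  ultimately show False
    using not_eventually_comparable_insert[OF assms(1,2,3)] by blast
qed

lemma comp_all_superset_initseg_stem:
  assumes "U \<noteq> bot" "\<forall>s. finite s \<longrightarrow> nonstd U (\<alpha> s)" "alpha_tree U \<alpha> A" "A \<subseteq> B"
    and "comp_all B b"
  shows "initseg b (stem A)"
proof (rule comp_all_initseg_if_eventually_insert[OF assms(1) _ _ _ _ assms(5)])
  have fin: "finite (stem A)" using assms(3) by (rule alpha_tree_stem_finite)
  then show "nonstd U (\<alpha> (stem A))" "finite (stem A)" using assms(2) by auto
  show "stem A \<in> B" using alpha_tree_stem_mem[OF assms(3)] assms(4) by auto
  show "eventually (\<lambda>i. insert (\<alpha> (stem A) i) (stem A) \<in> B) U"
    using alpha_tree_eventually_insert[OF assms(3) alpha_tree_stem_mem[OF assms(3)] initseg_refl[OF fin]]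
    by eventually_elim (use assms(4) in auto)
qed

lemma alpha_tree_Int_imp_stems:
  assumes "U \<noteq> bot" "\<forall>s. finite s \<longrightarrow> nonstd U (\<alpha> s)"
    and "alpha_tree U \<alpha> T" "alpha_tree U \<alpha> S" "alpha_tree U \<alpha> (S \<inter> T)"
  shows "(initseg (stem T) (stem S) \<and> stem S \<in> T) \<or> (initseg (stem S) (stem T) \<and> stem T \<in> S)"
proof -
  let ?r = "stem (S \<inter> T)"
  have S_r: "initseg (stem S) ?r"
    using comp_all_superset_initseg_stem[OF assms(1,2,5)] alpha_tree_is_stem[OF assms(4)]
    by (auto simp: is_stem_def)
  have T_r: "initseg (stem T) ?r"
    using comp_all_superset_initseg_stem[OF assms(1,2,5)] alpha_tree_is_stem[OF assms(3)]
    by (auto simp: is_stem_def)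
  have "?r \<in> S" "?r \<in> T" using alpha_tree_stem_mem[OF assms(5)] by auto
  then have "stem S \<in> T" "stem T \<in> S"
    using S_r T_r alpha_tree_is_tree[OF assms(3)] alpha_tree_is_tree[OF assms(4)]
    by (auto simp: is_tree_def)
  with initseg_common_extension_comparable[OF T_r S_r] show ?thesis
    by (auto simp: comparable_def)
qed

lemma alpha_tree_Int:
  assumes "U \<noteq> bot" "\<forall>s. finite s \<longrightarrow> nonstd U (\<alpha> s)"
    and "alpha_tree U \<alpha> T" "alpha_tree U \<alpha> S"
    and "initseg (stem T) (stem S)" "stem S \<in> T"
  shows "alpha_tree U \<alpha> (S \<inter> T)"
proof -
  let ?s = "stem S"
  have s_S: "?s \<in> S" using assms(4) by (rule alpha_tree_stem_mem)
  have fin: "finite ?s" using assms(4) by (rule alpha_tree_stem_finite)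
  have ext: "eventually (\<lambda>i. insert (\<alpha> s i) s \<in> S \<inter> T) U"
    if "s \<in> S \<inter> T" "initseg ?s s" for s
    using alpha_tree_eventually_insert[OF assms(4)] alpha_tree_eventually_insert[OF assms(3)]
      initseg_trans[OF assms(5)] that
    by (auto intro: eventually_conj)
  have "is_stem (S \<inter> T) ?s"
    unfolding is_stem_def
  proof (intro conjI notI)
    show "comp_all (S \<inter> T) ?s"
      using alpha_tree_is_stem[OF assms(4)] assms(6) by (auto simp: is_stem_def comp_all_def)
    assume "\<exists>s'. comp_all (S \<inter> T) s' \<and> initseg ?s s' \<and> s' \<noteq> ?s"
    then obtain s' where s': "comp_all (S \<inter> T) s'" "initseg ?s s'" "s' \<noteq> ?s" by blast
    have "initseg s' ?s"
      using comp_all_initseg_if_eventually_insert[OF assms(1) _ fin _ ext s'(1)]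
        assms(2,6) fin s_S initseg_refl[OF fin] by blast
    then show False using s'(2,3) initseg_subset by blast
  qed
  moreover from this have "stem (S \<inter> T) = ?s" by (rule stem_eqI)
  moreover have "is_tree (S \<inter> T)"
    using alpha_tree_is_tree[OF assms(3)] alpha_tree_is_tree[OF assms(4)] s_S assms(6)
    unfolding is_tree_def by blast
  ultimately show ?thesis
    using s_S assms(6) initseg_refl[OF fin] ext
    by (auto simp: alpha_tree_def subtree_above_def star_mem_def)
qed

theorem mainTheorem16:
  fixes U :: "nat filter" and \<alpha> :: "nat set \<Rightarrow> nat \<Rightarrow> nat" and S T :: "nat set set"
  assumes "is_ultrafilter U" and "nonprincipal U"
    and "\<forall>s. finite s \<longrightarrow> nonstd U (\<alpha> s)"
    and "alpha_tree U \<alpha> T" and "alpha_tree U \<alpha> S"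
  shows "alpha_tree U \<alpha> (S \<inter> T) \<longleftrightarrow>
    ((initseg (stem T) (stem S) \<and> stem S \<in> T) \<or> (initseg (stem S) (stem T) \<and> stem T \<in> S))"
    (is "_ \<longleftrightarrow> ?rhs")
proof
  have U: "U \<noteq> bot" using assms(1) by (simp add: is_ultrafilter_def)
  show "alpha_tree U \<alpha> (S \<inter> T) \<Longrightarrow> ?rhs"
    using alpha_tree_Int_imp_stems[OF U assms(3-5)] .
  assume "?rhs"
  then show "alpha_tree U \<alpha> (S \<inter> T)"
    using alpha_tree_Int[OF U assms(3,4,5)] alpha_tree_Int[OF U assms(3,5,4)]
    by (auto simp: Int_commute)
qed

end
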